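(* Let $M\geq N\geq 1$ and let $\rho=\epsilon\,|\psi\rangle\langle\psi|+\frac{1-\epsilon}{MN}I$ be a state on $\mathbb{C}^M\otimes\mathbb{C}^N$, where $0<\epsilon\leq 1$ and $|\psi\rangle$ is a unit vector with Schmidt decomposition $|\psi\rangle=\sum_{k=0}^{N-1}a_k|k\rangle_A\otimes|k\rangle_B$ ($a_k\geq 0$, $\sum_k a_k^2=1$). Let $a_m=\max_k a_k$. Then $$d_{\max}(\rho)=\begin{cases}\epsilon & \text{if } a_m^2\leq \tfrac12,\\ 2\epsilon\, a_m\sqrt{1-a_m^2} & \text{otherwise.}\end{cases}$$
   Context: For a state $\rho$ on $\mathbb{C}^M\otimes\mathbb{C}^N$ let $\rho_B=\mathrm{Tr}_A(\rho)$. A unitary $U^B$ on $\mathbb{C}^N$ is called cyclic (locally noneffective) for $\rho$ if $[\rho_B,U^B]=0$. Set $\rho_f=(I\otimes U^B)\rho(I\otimes U^{B\dagger})$ and define the Fu distance $d(\rho,U^B)=\frac{1}{\sqrt2}\|\rho-\rho_f\|_F$, where $\|X\|_F=\sqrt{\mathrm{Tr}(X^\dagger X)}$ is the Frobenius norm. Define $d_{\max}(\rho)=\max\{d(\rho,U^B): U^B \text{ unitary on } \mathbb{C}^N,\ [\rho_B,U^B]=0\}$. *)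

theory Defs
  imports "Jordan_Normal_Form.Jordan_Normal_Form"
begin

text \<open>Conventions. A bipartite operator on C^M (x) C^N is a complex (M*N) x (M*N) matrix,
  the product basis vector |i>_A (x) |j>_B (i < M, j < N) having index i*N + j.\<close>

definition cadj :: "complex mat \<Rightarrow> complex mat" where
  "cadj A = mat (dim_col A) (dim_row A) (\<lambda>(i,j). cnj (A $$ (j,i)))"

definition unitary_mat :: "nat \<Rightarrow> complex mat \<Rightarrow> bool" where
  "unitary_mat n U \<longleftrightarrow> U \<in> carrier_mat n n \<and> cadj U * U = 1\<^sub>m n \<and> U * cadj U = 1\<^sub>m n"

definition kron :: "nat \<Rightarrow> nat \<Rightarrow> complex mat \<Rightarrow> complex mat \<Rightarrow> complex mat" where
  "kron M N A B = mat (M*N) (M*N) (\<lambda>(r,c). A $$ (r div N, c div N) * B $$ (r mod N, c mod N))"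

definition ptrace_A :: "nat \<Rightarrow> nat \<Rightarrow> complex mat \<Rightarrow> complex mat" where
  "ptrace_A M N \<rho> = mat N N (\<lambda>(j,j'). \<Sum>i<M. \<rho> $$ (i*N + j, i*N + j'))"

definition frob_norm :: "complex mat \<Rightarrow> real" where
  "frob_norm X = sqrt (\<Sum>i<dim_row X. \<Sum>j<dim_col X. (cmod (X $$ (i,j)))\<^sup>2)"

definition rho_f :: "nat \<Rightarrow> nat \<Rightarrow> complex mat \<Rightarrow> complex mat \<Rightarrow> complex mat" where
  "rho_f M N \<rho> U = kron M N (1\<^sub>m M) U * \<rho> * cadj (kron M N (1\<^sub>m M) U)"

definition fu_dist :: "nat \<Rightarrow> nat \<Rightarrow> complex mat \<Rightarrow> complex mat \<Rightarrow> real" where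
  "fu_dist M N \<rho> U = frob_norm (\<rho> - rho_f M N \<rho> U) / sqrt 2"

definition cyclic_unitary :: "nat \<Rightarrow> nat \<Rightarrow> complex mat \<Rightarrow> complex mat \<Rightarrow> bool" where
  "cyclic_unitary M N \<rho> U \<longleftrightarrow> unitary_mat N U \<and> ptrace_A M N \<rho> * U = U * ptrace_A M N \<rho>"

definition d_max :: "nat \<Rightarrow> nat \<Rightarrow> complex mat \<Rightarrow> real" where
  "d_max M N \<rho> = Sup {fu_dist M N \<rho> U | U. cyclic_unitary M N \<rho> U}"

end

theory Submission
  imports Defs
begin

text \<open>Conjugating by \<open>I \<otimes> U\<close> moves only the pure part of \<open>\<rho>\<close>, so
  \<open>d(\<rho>, U) = \<epsilon> sqrt (1 - |z|\<^sup>2)\<close> with overlap \<open>z = \<langle>\<psi>, (I \<otimes> U) \<psi>\<rangle> = \<Sum>\<^sub>k a\<^sub>k\<^sup>2 \<langle>f\<^sub>k, U f\<^sub>k\<rangle>\<close>.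
  The reduced state is diagonal in the basis \<open>f\<^sub>k\<close> with eigenvalues \<open>(1 - \<epsilon>)/N + \<epsilon> a\<^sub>k\<^sup>2\<close>, so every
  unitary acting by phases \<open>w\<^sub>k\<close> on that basis is cyclic and has overlap \<open>\<Sum>\<^sub>k a\<^sub>k\<^sup>2 w\<^sub>k\<close>.
  If no \<open>a\<^sub>k\<^sup>2\<close> exceeds \<open>1/2\<close>, these phases can close the polygon with sides \<open>a\<^sub>k\<^sup>2\<close>, so the
  overlap vanishes and \<open>d = \<epsilon>\<close>. Otherwise the eigenvalue of \<open>f\<^sub>m\<close> is simple, so every
  cyclic \<open>U\<close> maps \<open>f\<^sub>m\<close> to a multiple of itself; then \<open>|z| \<ge> 2 a\<^sub>m\<^sup>2 - 1\<close>, with equality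
  when only the phase of \<open>f\<^sub>m\<close> is flipped.\<close>

definition orthonormal :: "nat \<Rightarrow> nat \<Rightarrow> (nat \<Rightarrow> complex vec) \<Rightarrow> bool" where
  "orthonormal n K v \<longleftrightarrow>
     (\<forall>k<K. v k \<in> carrier_vec n) \<and> (\<forall>k<K. \<forall>l<K. v k \<bullet>c v l = (if k = l then 1 else 0))"

lemma orthonormal_carrier: "orthonormal n K v \<Longrightarrow> k < K \<Longrightarrow> v k \<in> carrier_vec n"
  unfolding orthonormal_def by blast

lemma orthonormal_cscalar_prod:
  "orthonormal n K v \<Longrightarrow> k < K \<Longrightarrow> l < K \<Longrightarrow> v k \<bullet>c v l = (if k = l then 1 else 0)"
  unfolding orthonormal_def by blast

lemma sum_lessThan_mult:
  fixes g :: "nat \<Rightarrow> 'a::comm_monoid_add"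
  shows "(\<Sum>s<M*N. g s) = (\<Sum>i<M. \<Sum>j<N. g (i*N + j))"
proof -
  have "(\<Sum>s<M*N. g s) = (\<Sum>i<M. sum g {i*N..<i*N+N})"
    by (rule sum.nat_group[symmetric])
  also have "\<dots> = (\<Sum>i<M. \<Sum>j<N. g (i*N + j))"
    using sum.shift_bounds_nat_ivl[of g 0 "i*N" N for i]
    by (simp add: atLeast0LessThan add.commute)
  finally show ?thesis .
qed

lemma pair_index_less: "i < M \<Longrightarrow> j < N \<Longrightarrow> i*N + j < M*(N::nat)"
proof -
  assume "i < M" "j < N"
  then have "i*N + j < Suc i * N" by simp
  also have "\<dots> \<le> M * N" using \<open>i < M\<close> by (intro mult_le_mono1) simp
  finally show ?thesis .
qed

lemma pair_index_div [simp]: "j < (N::nat) \<Longrightarrow> (i*N + j) div N = i"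
  and pair_index_mod [simp]: "j < (N::nat) \<Longrightarrow> (i*N + j) mod N = j"
  by (simp_all add: add.commute)

lemma pair_index_bounds: "r < M*(N::nat) \<Longrightarrow> r div N < M" "r < M*(N::nat) \<Longrightarrow> r mod N < N"
  by (metis less_mult_imp_div_less mod_less_divisor mult.commute mult_zero_left
      not_less_zero zero_less_iff_neq_zero)+

lemma cscalar_prod_eq_sum:
  "x \<in> carrier_vec n \<Longrightarrow> y \<in> carrier_vec n \<Longrightarrow> x \<bullet>c y = (\<Sum>i<n. x $ i * cnj (y $ i))"
  unfolding scalar_prod_def by (auto simp: atLeast0LessThan conjugate_vec_def)

lemma cscalar_prod_commute:
  "x \<in> carrier_vec n \<Longrightarrow> y \<in> carrier_vec n \<Longrightarrow> y \<bullet>c x = cnj (x \<bullet>c y)"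
  by (simp add: cscalar_prod_eq_sum[of _ n] cnj_sum mult.commute)

lemma cmod_cscalar_prod_le_1:
  assumes x: "x \<in> carrier_vec n" and y: "y \<in> carrier_vec n" and "x \<bullet>c x = 1" "y \<bullet>c y = 1"
  shows "cmod (x \<bullet>c y) \<le> 1"
proof -
  have norm_sq: "(\<Sum>i<n. (cmod (v $ i))\<^sup>2) = 1" if "v \<in> carrier_vec n" "v \<bullet>c v = 1" for v
  proof -
    have "complex_of_real (\<Sum>i<n. (cmod (v $ i))\<^sup>2) = v \<bullet>c v"
      using that by (simp only: of_real_sum complex_norm_square cscalar_prod_eq_sum)
    then show ?thesis using that(2) by (metis of_real_eq_1_iff)
  qed
  have "cmod (x \<bullet>c y) \<le> (\<Sum>i<n. cmod (x $ i * cnj (y $ i)))"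
    using x y by (simp add: cscalar_prod_eq_sum norm_sum)
  also have "\<dots> \<le> (\<Sum>i<n. ((cmod (x $ i))\<^sup>2 + (cmod (y $ i))\<^sup>2) / 2)"
  proof (rule sum_mono)
    fix i
    have "0 \<le> (cmod (x $ i) - cmod (y $ i))\<^sup>2" by simp
    then show "cmod (x $ i * cnj (y $ i)) \<le> ((cmod (x $ i))\<^sup>2 + (cmod (y $ i))\<^sup>2) / 2"
      by (simp add: norm_mult power2_eq_square algebra_simps)
  qed
  also have "\<dots> = 1"
    using norm_sq[OF x] norm_sq[OF y] assms
    by (simp add: sum_divide_distrib[symmetric] sum.distrib)
  finally show ?thesis .
qed

lemma index_mult_mat_sum:
  fixes A B :: "'a::comm_ring_1 mat"
  assumes "A \<in> carrier_mat n k" "B \<in> carrier_mat k m" "i < n" "j < m"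
  shows "(A * B) $$ (i,j) = (\<Sum>p<k. A $$ (i,p) * B $$ (p,j))"
  using assms by (auto simp: scalar_prod_def atLeast0LessThan)

lemma index_mult_mat_vec_sum:
  fixes A :: "'a::comm_ring_1 mat"
  assumes "A \<in> carrier_mat n k" "v \<in> carrier_vec k" "i < n"
  shows "(A *\<^sub>v v) $ i = (\<Sum>p<k. A $$ (i,p) * v $ p)"
  using assms by (auto simp: scalar_prod_def atLeast0LessThan)

lemma lincomb_cscalar_prod:
  assumes "u \<in> carrier_vec n" "\<forall>k<K. v k \<in> carrier_vec n"
  shows "(\<Sum>j<n. (\<Sum>k<K. c k * v k $ j) * cnj (u $ j)) = (\<Sum>k<K. c k * (v k \<bullet>c u))"
proof -
  have "(\<Sum>j<n. (\<Sum>k<K. c k * v k $ j) * cnj (u $ j)) = (\<Sum>j<n. \<Sum>k<K. c k * (v k $ j * cnj (u $ j)))"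
    by (simp add: sum_distrib_right mult.assoc)
  also have "\<dots> = (\<Sum>k<K. \<Sum>j<n. c k * (v k $ j * cnj (u $ j)))"
    by (rule sum.swap)
  also have "\<dots> = (\<Sum>k<K. c k * (v k \<bullet>c u))"
    using assms by (intro sum.cong refl) (simp add: cscalar_prod_eq_sum[of _ n] sum_distrib_left)
  finally show ?thesis .
qed

lemma orthonormal_lincomb_coeff:
  assumes f: "orthonormal n K v" and l: "l < K"
  shows "(\<Sum>j<n. (\<Sum>k<K. c k * v k $ j) * cnj (v l $ j)) = c l"
proof -
  have "(\<Sum>j<n. (\<Sum>k<K. c k * v k $ j) * cnj (v l $ j)) = (\<Sum>k<K. c k * (v k \<bullet>c v l))"
    using f l by (intro lincomb_cscalar_prod) (auto simp: orthonormal_carrier)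
  also have "\<dots> = (\<Sum>k<K. if k = l then c l else 0)"
    using f l by (intro sum.cong refl) (simp add: orthonormal_cscalar_prod)
  finally show ?thesis using l by simp
qed

lemma orthonormal_lincomb_cscalar_prod:
  assumes "orthonormal n K v"
  shows "(\<Sum>i<n. (\<Sum>k<K. x k * v k $ i) * cnj (\<Sum>k<K. y k * v k $ i)) = (\<Sum>k<K. x k * cnj (y k))"
proof -
  have "(\<Sum>i<n. (\<Sum>k<K. x k * v k $ i) * cnj (\<Sum>l<K. y l * v l $ i))
      = (\<Sum>l<K. cnj (y l) * (\<Sum>i<n. (\<Sum>k<K. x k * v k $ i) * cnj (v l $ i)))"
    by (simp add: cnj_sum sum_distrib_left sum_distrib_right mult_ac) (rule sum.swap)
  also have "\<dots> = (\<Sum>l<K. cnj (y l) * x l)"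
    using assms by (intro sum.cong refl) (simp add: orthonormal_lincomb_coeff)
  finally show ?thesis by (simp add: mult.commute)
qed

lemma unitary_mat_cscalar_prod:
  assumes U: "unitary_mat n U" and x: "x \<in> carrier_vec n" and y: "y \<in> carrier_vec n"
  shows "(U *\<^sub>v x) \<bullet>c (U *\<^sub>v y) = x \<bullet>c y"
proof -
  have Uc: "U \<in> carrier_mat n n" and UU: "cadj U * U = 1\<^sub>m n"
    using U unfolding unitary_mat_def by auto
  have cols: "(\<Sum>j<n. cnj (U $$ (j,q)) * U $$ (j,p)) = (if q = p then 1 else 0)"
    if "p < n" "q < n" for p q
  proof -
    have "(cadj U * U) $$ (q,p) = (\<Sum>j<n. cnj (U $$ (j,q)) * U $$ (j,p))"
      using that Uc by (subst index_mult_mat_sum[of _ n n]) (auto simp: cadj_def)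
    then show ?thesis using UU that by simp
  qed
  have "(U *\<^sub>v x) \<bullet>c (U *\<^sub>v y) = (\<Sum>j<n. (\<Sum>p<n. U $$ (j,p) * x $ p) * cnj (\<Sum>q<n. U $$ (j,q) * y $ q))"
    using Uc x y by (simp add: cscalar_prod_eq_sum[of _ n] index_mult_mat_vec_sum[of _ n n] del: index_mult_mat_vec)
  also have "\<dots> = (\<Sum>j<n. \<Sum>p<n. \<Sum>q<n. x $ p * cnj (y $ q) * (cnj (U $$ (j,q)) * U $$ (j,p)))"
    by (simp add: sum_product cnj_sum mult_ac)
  also have "\<dots> = (\<Sum>p<n. \<Sum>q<n. \<Sum>j<n. x $ p * cnj (y $ q) * (cnj (U $$ (j,q)) * U $$ (j,p)))"
    by (subst sum.swap) (rule sum.cong[OF refl], rule sum.swap)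
  also have "\<dots> = (\<Sum>p<n. \<Sum>q<n. x $ p * cnj (y $ q) * (\<Sum>j<n. cnj (U $$ (j,q)) * U $$ (j,p)))"
    by (simp only: sum_distrib_left)
  also have "\<dots> = (\<Sum>p<n. \<Sum>q<n. if q = p then x $ p * cnj (y $ p) else 0)"
    by (intro sum.cong refl) (simp add: cols)
  also have "\<dots> = x \<bullet>c y" using x y by (simp add: cscalar_prod_eq_sum[of _ n])
  finally show ?thesis .
qed

section \<open>Matrices diagonal in an orthonormal basis\<close>

definition diag_in_basis :: "nat \<Rightarrow> (nat \<Rightarrow> complex vec) \<Rightarrow> complex \<Rightarrow> (nat \<Rightarrow> complex) \<Rightarrow> complex mat" where
  "diag_in_basis n f \<gamma> \<alpha> =
     mat n n (\<lambda>(j,j'). \<gamma> * (if j = j' then 1 else 0) + (\<Sum>k<n. \<alpha> k * f k $ j * cnj (f k $ j')))"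

lemma diag_in_basis_carrier [simp]: "diag_in_basis n f \<gamma> \<alpha> \<in> carrier_mat n n"
  by (simp add: diag_in_basis_def)

lemma index_diag_in_basis:
  "j < n \<Longrightarrow> j' < n \<Longrightarrow>
   diag_in_basis n f \<gamma> \<alpha> $$ (j,j') = \<gamma> * (if j = j' then 1 else 0) + (\<Sum>k<n. \<alpha> k * f k $ j * cnj (f k $ j'))"
  by (simp add: diag_in_basis_def)

lemma diag_in_basis_mult:
  assumes f: "orthonormal n n f"
  shows "diag_in_basis n f \<gamma> \<alpha> * diag_in_basis n f \<delta> \<beta>
       = diag_in_basis n f (\<gamma>*\<delta>) (\<lambda>k. \<gamma> * \<beta> k + \<delta> * \<alpha> k + \<alpha> k * \<beta> k)"
    (is "_ = ?P")
proof (rule eq_matI)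
  fix j j' assume "j < dim_row ?P" "j' < dim_col ?P"
  then have j: "j < n" "j' < n" by (simp_all add: diag_in_basis_def)
  define A where "A = (\<lambda>p. \<Sum>k<n. \<alpha> k * f k $ j * cnj (f k $ p))"
  define B where "B = (\<lambda>p. \<Sum>k<n. \<beta> k * f k $ p * cnj (f k $ j'))"
  have AB: "(\<Sum>p<n. A p * B p) = (\<Sum>k<n. \<alpha> k * \<beta> k * f k $ j * cnj (f k $ j'))"
  proof -
    have "(\<Sum>p<n. A p * B p)
        = (\<Sum>p<n. (\<Sum>k<n. (\<beta> k * cnj (f k $ j')) * f k $ p) * cnj (\<Sum>k<n. cnj (\<alpha> k * f k $ j) * f k $ p))"
      by (simp add: A_def B_def cnj_sum mult_ac)
    also have "\<dots> = (\<Sum>k<n. \<beta> k * cnj (f k $ j') * cnj (cnj (\<alpha> k * f k $ j)))"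
      by (rule orthonormal_lincomb_cscalar_prod[OF f])
    finally show ?thesis by (simp add: mult_ac)
  qed
  have "(diag_in_basis n f \<gamma> \<alpha> * diag_in_basis n f \<delta> \<beta>) $$ (j,j')
      = (\<Sum>p<n. (\<gamma> * (if j = p then 1 else 0) + A p) * (\<delta> * (if p = j' then 1 else 0) + B p))"
    using j by (subst index_mult_mat_sum[of _ n n]) (simp_all add: index_diag_in_basis A_def B_def)
  also have "\<dots> = (\<Sum>p<n. (if p = j then \<gamma> * \<delta> * (if p = j' then 1 else 0) + \<gamma> * B p else 0)
                      + (if p = j' then \<delta> * A p else 0) + A p * B p)"
    by (intro sum.cong refl) (auto simp: algebra_simps)
  also have "\<dots> = \<gamma> * \<delta> * (if j = j' then 1 else 0) + \<gamma> * B j + \<delta> * A j' + (\<Sum>p<n. A p * B p)"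
    using j by (simp only: sum.distrib sum.delta finite_lessThan lessThan_iff if_True)
  also have "\<dots> = \<gamma> * \<delta> * (if j = j' then 1 else 0) + \<gamma> * B j + \<delta> * A j'
                   + (\<Sum>k<n. \<alpha> k * \<beta> k * f k $ j * cnj (f k $ j'))"
    by (simp only: AB)
  also have "\<dots> = ?P $$ (j,j')"
    using j by (simp add: index_diag_in_basis A_def B_def sum.distrib sum_distrib_left
        ring_distribs mult.assoc)
  finally show "(diag_in_basis n f \<gamma> \<alpha> * diag_in_basis n f \<delta> \<beta>) $$ (j,j') = ?P $$ (j,j')" .
qed (simp_all add: diag_in_basis_def)

lemma diag_in_basis_commute:
  "orthonormal n n f \<Longrightarrow>
   diag_in_basis n f \<gamma> \<alpha> * diag_in_basis n f \<delta> \<beta> = diag_in_basis n f \<delta> \<beta> * diag_in_basis n f \<gamma> \<alpha>"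
  by (simp add: diag_in_basis_mult algebra_simps)

lemma cadj_diag_in_basis: "cadj (diag_in_basis n f \<gamma> \<alpha>) = diag_in_basis n f (cnj \<gamma>) (\<lambda>k. cnj (\<alpha> k))"
  by (rule eq_matI) (auto simp: cadj_def diag_in_basis_def cnj_sum mult_ac)

lemma diag_in_basis_one: "diag_in_basis n f 1 (\<lambda>k. 0) = 1\<^sub>m n"
  by (rule eq_matI) (auto simp: diag_in_basis_def)

lemma diag_in_basis_mult_vec:
  assumes x: "x \<in> carrier_vec n" and f: "\<forall>k<n. f k \<in> carrier_vec n"
  shows "diag_in_basis n f \<gamma> \<alpha> *\<^sub>v x = vec n (\<lambda>j. \<gamma> * x $ j + (\<Sum>k<n. \<alpha> k * (x \<bullet>c f k) * f k $ j))"
proof (rule eq_vecI)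
  fix j assume "j < dim_vec (vec n (\<lambda>j. \<gamma> * x $ j + (\<Sum>k<n. \<alpha> k * (x \<bullet>c f k) * f k $ j)))"
  then have j: "j < n" by simp
  have "(diag_in_basis n f \<gamma> \<alpha> *\<^sub>v x) $ j
      = (\<Sum>p<n. \<gamma> * (if j = p then 1 else 0) * x $ p) + (\<Sum>p<n. \<Sum>k<n. \<alpha> k * f k $ j * cnj (f k $ p) * x $ p)"
    using j x by (simp add: index_mult_mat_vec_sum[of _ n n] index_diag_in_basis algebra_simps
        sum.distrib sum_distrib_left del: index_mult_mat_vec)
  also have "\<dots> = \<gamma> * x $ j + (\<Sum>k<n. \<Sum>p<n. \<alpha> k * f k $ j * cnj (f k $ p) * x $ p)"
    using j by (simp add: if_distrib if_distribR sum.delta cong: if_cong) (rule sum.swap)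
  also have "\<dots> = \<gamma> * x $ j + (\<Sum>k<n. \<alpha> k * (x \<bullet>c f k) * f k $ j)"
    using x f by (simp add: cscalar_prod_eq_sum[of _ n] sum_distrib_left sum_distrib_right mult_ac)
  finally show "(diag_in_basis n f \<gamma> \<alpha> *\<^sub>v x) $ j
      = vec n (\<lambda>j. \<gamma> * x $ j + (\<Sum>k<n. \<alpha> k * (x \<bullet>c f k) * f k $ j)) $ j"
    using j by simp
qed (simp add: diag_in_basis_def)

lemma diag_in_basis_mult_vec_basis:
  assumes f: "orthonormal n n f" and k: "k < n"
  shows "diag_in_basis n f \<gamma> \<alpha> *\<^sub>v f k = (\<gamma> + \<alpha> k) \<cdot>\<^sub>v f k"
proof -
  have fk: "f k \<in> carrier_vec n" using f k by (rule orthonormal_carrier)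
  have "(\<Sum>l<n. \<alpha> l * (f k \<bullet>c f l) * f l $ j) = \<alpha> k * f k $ j" for j
  proof -
    have "(\<Sum>l<n. \<alpha> l * (f k \<bullet>c f l) * f l $ j) = (\<Sum>l<n. if l = k then \<alpha> k * f k $ j else 0)"
      using f k by (intro sum.cong refl) (auto simp: orthonormal_cscalar_prod)
    then show ?thesis using k by simp
  qed
  then show ?thesis
    using fk f by (auto simp: diag_in_basis_mult_vec orthonormal_carrier algebra_simps)
qed

definition phase_unitary :: "nat \<Rightarrow> (nat \<Rightarrow> complex vec) \<Rightarrow> (nat \<Rightarrow> complex) \<Rightarrow> complex mat" where
  "phase_unitary n f w = diag_in_basis n f 1 (\<lambda>k. w k - 1)"

lemma unitary_phase_unitary:
  assumes f: "orthonormal n n f" and w: "\<forall>k. cmod (w k) = 1"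
  shows "unitary_mat n (phase_unitary n f w)"
proof -
  have "cnj (w k) * w k = 1" for k
    using w complex_norm_square[of "w k"] by (simp add: mult.commute)
  then have "(\<lambda>k. 1 * (w k - 1) + 1 * cnj (w k - 1) + cnj (w k - 1) * (w k - 1)) = (\<lambda>k. 0)"
    "(\<lambda>k. 1 * cnj (w k - 1) + 1 * (w k - 1) + (w k - 1) * cnj (w k - 1)) = (\<lambda>k. 0)"
    by (auto simp: algebra_simps)
  then show ?thesis
    unfolding unitary_mat_def phase_unitary_def cadj_diag_in_basis diag_in_basis_mult[OF f]
    by (simp add: diag_in_basis_one)
qed

lemma phase_unitary_cscalar_prod:
  assumes f: "orthonormal n n f" and k: "k < n"
  shows "(phase_unitary n f w *\<^sub>v f k) \<bullet>c f k = w k"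
  using orthonormal_carrier[OF f k] orthonormal_cscalar_prod[OF f k k]
  by (simp add: phase_unitary_def diag_in_basis_mult_vec_basis[OF f k])

lemma commuting_unitary_simple_eigvec:
  assumes f: "orthonormal n n f" and U: "unitary_mat n U"
    and comm: "diag_in_basis n f \<gamma> \<alpha> * U = U * diag_in_basis n f \<gamma> \<alpha>"
    and m: "m < n" "\<alpha> m \<noteq> 0" and simple: "\<forall>l<n. l \<noteq> m \<longrightarrow> \<alpha> l \<noteq> \<alpha> m"
  shows "cmod ((U *\<^sub>v f m) \<bullet>c f m) = 1"
proof -
  let ?R = "diag_in_basis n f \<gamma> \<alpha>"
  have Uc: "U \<in> carrier_mat n n" using U by (simp add: unitary_mat_def)
  have fc: "\<forall>k<n. f k \<in> carrier_vec n" using f by (simp add: orthonormal_carrier)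
  have fm: "f m \<in> carrier_vec n" using fc m by simp
  define v where "v = U *\<^sub>v f m"
  define \<beta> where "\<beta> = (\<lambda>k. v \<bullet>c f k)"
  have v: "v \<in> carrier_vec n" "v \<bullet>c v = 1"
    using Uc fm unitary_mat_cscalar_prod[OF U fm fm] orthonormal_cscalar_prod[OF f m(1) m(1)]
    by (auto simp: v_def)
  have "?R *\<^sub>v v = (?R * U) *\<^sub>v f m"
    unfolding v_def by (rule assoc_mult_mat_vec[symmetric, OF diag_in_basis_carrier Uc fm])
  also have "\<dots> = U *\<^sub>v (?R *\<^sub>v f m)"
    unfolding comm by (rule assoc_mult_mat_vec[OF Uc diag_in_basis_carrier fm])
  also have "\<dots> = (\<gamma> + \<alpha> m) \<cdot>\<^sub>v v"
    unfolding diag_in_basis_mult_vec_basis[OF f m(1)] v_def by (rule mult_mat_vec[OF Uc fm])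
  finally have eigvec: "?R *\<^sub>v v = (\<gamma> + \<alpha> m) \<cdot>\<^sub>v v" .
  have expand: "\<alpha> m * v $ j = (\<Sum>k<n. (\<alpha> k * \<beta> k) * f k $ j)" if "j < n" for j
    using arg_cong[OF eigvec, of "\<lambda>x. x $ j"] that v(1)
    by (simp add: diag_in_basis_mult_vec[OF v(1) fc] \<beta>_def algebra_simps)
  have coeff: "\<alpha> m * \<beta> l = \<alpha> l * \<beta> l" if "l < n" for l
  proof -
    have "\<alpha> m * \<beta> l = (\<Sum>j<n. (\<alpha> m * v $ j) * cnj (f l $ j))"
      using v(1) fc that by (simp add: \<beta>_def cscalar_prod_eq_sum[of _ n] sum_distrib_left mult.assoc)
    also have "\<dots> = (\<Sum>j<n. (\<Sum>k<n. (\<alpha> k * \<beta> k) * f k $ j) * cnj (f l $ j))"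
      by (intro sum.cong refl) (simp add: expand)
    also have "\<dots> = \<alpha> l * \<beta> l" by (rule orthonormal_lincomb_coeff[OF f that])
    finally show ?thesis .
  qed
  have \<beta>_zero: "\<beta> l = 0" if "l < n" "l \<noteq> m" for l
    using coeff[OF that(1)] simple that by (metis mult_cancel_right)
  have "\<alpha> m = (\<Sum>j<n. (\<alpha> m * v $ j) * cnj (v $ j))"
    using v by (simp add: cscalar_prod_eq_sum[of _ n] sum_distrib_left[symmetric] mult.assoc)
  also have "\<dots> = (\<Sum>j<n. (\<Sum>k<n. (\<alpha> k * \<beta> k) * f k $ j) * cnj (v $ j))"
    by (intro sum.cong refl) (simp add: expand)
  also have "\<dots> = (\<Sum>k<n. \<alpha> k * \<beta> k * cnj (\<beta> k))"
    using v(1) fc by (simp add: lincomb_cscalar_prod \<beta>_def cscalar_prod_commute[of v n])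
  also have "\<dots> = (\<Sum>k<n. if k = m then \<alpha> m * (\<beta> m * cnj (\<beta> m)) else 0)"
    using \<beta>_zero by (intro sum.cong refl) (auto simp: mult.assoc)
  finally have "\<alpha> m * 1 = \<alpha> m * (\<beta> m * cnj (\<beta> m))" using m by simp
  then have "(cmod (\<beta> m))\<^sup>2 = 1"
    using m(2) by (metis complex_norm_square mult_left_cancel of_real_eq_1_iff)
  then have "cmod (\<beta> m) = 1" using norm_ge_zero[of "\<beta> m"] by (auto simp: power2_eq_1_iff)
  then show ?thesis by (simp add: \<beta>_def v_def)
qed

section \<open>Closing a polygon with unit phases\<close>

lemma exists_unit_norm_add_eq:
  fixes r b t :: real
  assumes "0 \<le> r" "0 \<le> b" "\<bar>r - b\<bar> \<le> t" "t \<le> r + b"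
  shows "\<exists>u. cmod u = 1 \<and> cmod (complex_of_real r + complex_of_real b * u) = t"
proof (cases "r = 0 \<or> b = 0")
  case True
  then have "t = r + b" using assms by auto
  then show ?thesis using assms True by (intro exI[of _ 1]) auto
next
  case False
  then have rb: "r > 0" "b > 0" using assms by auto
  define c where "c = (t\<^sup>2 - r\<^sup>2 - b\<^sup>2) / (2*r*b)"
  have t0: "t \<ge> 0" using assms by linarith
  have "t\<^sup>2 \<le> (r+b)\<^sup>2" using assms t0 by (simp add: power_mono)
  moreover have "(r-b)\<^sup>2 \<le> t\<^sup>2" using assms t0
    by (metis abs_le_square_iff abs_of_nonneg)
  ultimately have "c \<le> 1" "-1 \<le> c" using rb unfolding c_def
    by (auto simp: field_simps power2_eq_square)
  then have cc: "c\<^sup>2 \<le> 1" by (metis abs_le_iff abs_square_le_1 minus_le_iff)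
  define u where "u = Complex c (sqrt (1 - c\<^sup>2))"
  have "cmod u = 1" unfolding u_def cmod_def using cc by simp
  moreover have "(cmod (complex_of_real r + complex_of_real b * u))\<^sup>2 = t\<^sup>2"
  proof -
    have "(cmod (complex_of_real r + complex_of_real b * u))\<^sup>2 = (r + b*c)\<^sup>2 + (b * sqrt (1 - c\<^sup>2))\<^sup>2"
      unfolding u_def cmod_def by (simp add: complex_of_real_def)
    also have "\<dots> = r\<^sup>2 + 2*r*b*c + b\<^sup>2"
      using cc by (simp add: power2_eq_square algebra_simps power_mult_distrib)
    also have "\<dots> = t\<^sup>2" unfolding c_def using rb by (simp add: field_simps)
    finally show ?thesis .
  qed
  then have "cmod (complex_of_real r + complex_of_real b * u) = t"
    using t0 by (metis norm_ge_zero power2_eq_iff_nonneg)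
  ultimately show ?thesis by blast
qed

lemma triangle_phases_sum_zero:
  fixes A B C :: real
  assumes "0 \<le> A" "0 \<le> B" "0 \<le> C" "A \<le> B + C" "B \<le> A + C" "C \<le> A + B"
  shows "\<exists>u v. cmod u = 1 \<and> cmod v = 1 \<and>
           complex_of_real A + complex_of_real B * u + complex_of_real C * v = 0"
proof -
  obtain u where u: "cmod u = 1" "cmod (complex_of_real A + complex_of_real B * u) = C"
    using exists_unit_norm_add_eq[of A B C] assms by (auto simp: abs_le_iff)
  show ?thesis
  proof (cases "C = 0")
    case True
    then show ?thesis using u by (intro exI[of _ u] exI[of _ 1]) auto
  next
    case False
    define v where "v = - (complex_of_real A + complex_of_real B * u) / complex_of_real C"
    have "cmod v = 1" unfolding v_def norm_divide norm_minus_cancel using u False assms(3) by simp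
    moreover have "complex_of_real C * v = - (complex_of_real A + complex_of_real B * u)"
      unfolding v_def using False by simp
    ultimately show ?thesis using u by (intro exI[of _ u] exI[of _ v]) auto
  qed
qed

lemma sum_lessThan_split_at:
  fixes g :: "nat \<Rightarrow> 'a::comm_monoid_add"
  assumes "j < N"
  shows "(\<Sum>k<N. g k) = (\<Sum>k<j. g k) + g j + (\<Sum>k\<in>{Suc j..<N}. g k)"
  using sum.atLeastLessThan_concat[of 0 "Suc j" N g] assms
  by (simp add: atLeast0LessThan[symmetric])

lemma exists_weighted_median:
  fixes b :: "nat \<Rightarrow> real"
  assumes b: "\<forall>k<N. 0 \<le> b k" and N: "0 < N"
  shows "\<exists>j<N. 2 * (\<Sum>k<j. b k) \<le> (\<Sum>k<N. b k) \<and> (\<Sum>k<N. b k) \<le> 2 * (\<Sum>k<Suc j. b k)"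
proof -
  define S where "S = (\<Sum>k<N. b k)"
  have "S \<ge> 0" unfolding S_def using b by (intro sum_nonneg) auto
  then have ex: "S \<le> 2 * (\<Sum>k<Suc (N - 1). b k)" using N by (simp add: S_def)
  define j where "j = (LEAST j. S \<le> 2 * (\<Sum>k<Suc j. b k))"
  have "S \<le> 2 * (\<Sum>k<Suc j. b k)" unfolding j_def by (rule LeastI[of _ "N - 1"], rule ex)
  moreover have "j < N"
  proof -
    have "j \<le> N - 1" unfolding j_def by (rule Least_le, rule ex)
    then show ?thesis using N by simp
  qed
  moreover have "2 * (\<Sum>k<j. b k) \<le> S"
  proof (cases j)
    case 0 then show ?thesis using \<open>S \<ge> 0\<close> by simp
  next
    case (Suc i)
    then show ?thesis using not_less_Least[of i "\<lambda>j. S \<le> 2 * (\<Sum>k<Suc j. b k)"] j_def by simp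
  qed
  ultimately show ?thesis unfolding S_def by blast
qed

lemma polygon_phases_sum_zero:
  fixes b :: "nat \<Rightarrow> real"
  assumes b: "\<forall>k<N. 0 \<le> b k" and dominated: "\<forall>k<N. 2 * b k \<le> (\<Sum>k<N. b k)"
  shows "\<exists>w. (\<forall>k. cmod (w k) = 1) \<and> (\<Sum>k<N. complex_of_real (b k) * w k) = 0"
proof (cases "N = 0")
  case True
  then show ?thesis by (intro exI[of _ "\<lambda>k. 1"]) auto
next
  case False
  text \<open>Cut the polygon at a weighted median edge j: the edges before j, edge j and the
    edges after j then have total lengths satisfying the triangle inequalities.\<close>
  then obtain j where j: "j < N" and median: "2 * (\<Sum>k<j. b k) \<le> (\<Sum>k<N. b k)"
    "(\<Sum>k<N. b k) \<le> 2 * (\<Sum>k<Suc j. b k)"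
    using exists_weighted_median[OF b] by auto
  define A where "A = (\<Sum>k<j. b k)"
  define C where "C = (\<Sum>k\<in>{Suc j..<N}. b k)"
  have S: "(\<Sum>k<N. b k) = A + b j + C"
    unfolding A_def C_def by (rule sum_lessThan_split_at[OF j])
  have "0 \<le> A" "0 \<le> C" unfolding A_def C_def using b j by (auto intro: sum_nonneg)
  moreover have "2 * b j \<le> A + b j + C" using dominated j S by simp
  ultimately obtain u v where uv: "cmod u = 1" "cmod v = 1"
      "complex_of_real A + complex_of_real (b j) * u + complex_of_real C * v = 0"
    using triangle_phases_sum_zero[of A "b j" C] median b j S by (auto simp: A_def)
  define w where "w = (\<lambda>k. if k < j then 1 else if k = j then u else v)"
  have "(\<Sum>k<N. complex_of_real (b k) * w k)
      = (\<Sum>k<j. complex_of_real (b k)) + complex_of_real (b j) * u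
        + (\<Sum>k\<in>{Suc j..<N}. complex_of_real (b k) * v)"
  proof -
    have "(\<Sum>k<j. complex_of_real (b k) * w k) = (\<Sum>k<j. complex_of_real (b k))"
      by (rule sum.cong) (auto simp: w_def)
    moreover have "(\<Sum>k\<in>{Suc j..<N}. complex_of_real (b k) * w k)
        = (\<Sum>k\<in>{Suc j..<N}. complex_of_real (b k) * v)"
      by (rule sum.cong) (auto simp: w_def)
    ultimately show ?thesis by (simp add: sum_lessThan_split_at[OF j] w_def)
  qed
  also have "\<dots> = 0"
    using uv(3) by (simp add: A_def C_def sum_distrib_right)
  finally show ?thesis using uv by (intro exI[of _ w]) (auto simp: w_def)
qed

section \<open>Fu distance of a noisy pure state\<close>

lemma index_kron_one:
  assumes "r < M*N" "s < M*N"
  shows "kron M N (1\<^sub>m M) U $$ (r,s) = (if r div N = s div N then U $$ (r mod N, s mod N) else 0)"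
  using assms pair_index_bounds[of r M N] pair_index_bounds[of s M N] by (simp add: kron_def)

lemma kron_carrier [simp]: "kron M N A B \<in> carrier_mat (M*N) (M*N)"
  by (simp add: kron_def)

lemma kron_one_mult:
  assumes U: "U \<in> carrier_mat N N" and V: "V \<in> carrier_mat N N"
  shows "kron M N (1\<^sub>m M) U * kron M N (1\<^sub>m M) V = kron M N (1\<^sub>m M) (U * V)"
proof (rule eq_matI)
  fix r c assume "r < dim_row (kron M N (1\<^sub>m M) (U * V))" "c < dim_col (kron M N (1\<^sub>m M) (U * V))"
  then have rc: "r < M*N" "c < M*N" by (simp_all add: kron_def)
  then have bounds: "r div N < M" "r mod N < N" "c mod N < N"
    using pair_index_bounds by auto
  have "(kron M N (1\<^sub>m M) U * kron M N (1\<^sub>m M) V) $$ (r,c)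
      = (\<Sum>t<M*N. kron M N (1\<^sub>m M) U $$ (r,t) * kron M N (1\<^sub>m M) V $$ (t,c))"
    using rc by (intro index_mult_mat_sum) simp_all
  also have "\<dots> = (\<Sum>i<M. \<Sum>j<N. (if r div N = i then U $$ (r mod N, j) else 0)
                         * (if i = c div N then V $$ (j, c mod N) else 0))"
    unfolding sum_lessThan_mult using rc
    by (intro sum.cong refl) (simp add: index_kron_one pair_index_less)
  also have "\<dots> = (\<Sum>i<M. if i = r div N then
                   (if r div N = c div N then (\<Sum>j<N. U $$ (r mod N, j) * V $$ (j, c mod N)) else 0)
                 else 0)"
    by (intro sum.cong refl) auto
  also have "\<dots> = kron M N (1\<^sub>m M) (U * V) $$ (r,c)"
    using rc bounds index_mult_mat_sum[OF U V, of "r mod N" "c mod N"] by (simp add: index_kron_one)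
  finally show "(kron M N (1\<^sub>m M) U * kron M N (1\<^sub>m M) V) $$ (r,c) = kron M N (1\<^sub>m M) (U * V) $$ (r,c)" .
qed (simp_all add: kron_def)

lemma cadj_kron_one:
  "U \<in> carrier_mat N N \<Longrightarrow> cadj (kron M N (1\<^sub>m M) U) = kron M N (1\<^sub>m M) (cadj U)"
  by (rule eq_matI) (auto simp: cadj_def kron_def pair_index_bounds)

lemma kron_one_one: "kron M N (1\<^sub>m M) (1\<^sub>m N) = 1\<^sub>m (M*N)"
proof (rule eq_matI)
  fix r c assume "r < dim_row (1\<^sub>m (M*N))" "c < dim_col (1\<^sub>m (M*N))"
  then have "r < M*N" "c < M*N" by simp_all
  moreover have "r = c \<longleftrightarrow> r div N = c div N \<and> r mod N = c mod N" by (metis div_mult_mod_eq)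
  ultimately show "kron M N (1\<^sub>m M) (1\<^sub>m N) $$ (r,c) = 1\<^sub>m (M*N) $$ (r,c)"
    using pair_index_bounds by (auto simp: index_kron_one)
qed (simp_all add: kron_def)

lemma unitary_kron_one:
  assumes "unitary_mat N U"
  shows "unitary_mat (M*N) (kron M N (1\<^sub>m M) U)"
proof -
  have U: "U \<in> carrier_mat N N" "cadj U \<in> carrier_mat N N"
    using assms by (auto simp: unitary_mat_def cadj_def)
  then show ?thesis
    using assms by (simp add: unitary_mat_def cadj_kron_one kron_one_mult kron_one_one)
qed

definition rank_one :: "complex vec \<Rightarrow> complex mat" where
  "rank_one v = mat (dim_vec v) (dim_vec v) (\<lambda>(r,c). v $ r * cnj (v $ c))"

lemma rank_one_carrier [simp]: "v \<in> carrier_vec n \<Longrightarrow> rank_one v \<in> carrier_mat n n"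
  by (simp add: rank_one_def)

lemma rank_one_conj:
  assumes K: "K \<in> carrier_mat n n" and v: "v \<in> carrier_vec n"
  shows "K * rank_one v * cadj K = rank_one (K *\<^sub>v v)"
proof (rule eq_matI)
  fix r c assume "r < dim_row (rank_one (K *\<^sub>v v))" "c < dim_col (rank_one (K *\<^sub>v v))"
  then have rc: "r < n" "c < n" using K by (simp_all add: rank_one_def)
  have KR: "(K * rank_one v) $$ (r,t) = (K *\<^sub>v v) $ r * cnj (v $ t)" if "t < n" for t
    using K v rc that
    by (subst index_mult_mat_sum[of _ n n]) (simp_all add: index_mult_mat_vec_sum[of _ n n]
        rank_one_def sum_distrib_right mult.assoc del: index_mult_mat_vec)
  have "(K * rank_one v * cadj K) $$ (r,c) = (\<Sum>t<n. (K *\<^sub>v v) $ r * cnj (v $ t) * cnj (K $$ (c,t)))"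
    using K v rc by (subst index_mult_mat_sum[of _ n n]) (auto simp: KR cadj_def)
  also have "\<dots> = (K *\<^sub>v v) $ r * cnj ((K *\<^sub>v v) $ c)"
    using K v rc by (simp add: index_mult_mat_vec_sum[of K n n v c] cnj_sum
        sum_distrib_left mult_ac del: index_mult_mat_vec)
  also have "\<dots> = rank_one (K *\<^sub>v v) $$ (r,c)"
    using K rc by (simp add: rank_one_def)
  finally show "(K * rank_one v * cadj K) $$ (r,c) = rank_one (K *\<^sub>v v) $$ (r,c)" .
qed (use K v in \<open>simp_all add: rank_one_def cadj_def\<close>)

lemma frob_norm_smult: "frob_norm (c \<cdot>\<^sub>m X) = cmod c * frob_norm X"
  by (simp add: frob_norm_def norm_mult power_mult_distrib sum_distrib_left[symmetric] real_sqrt_mult)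

lemma frob_norm_rank_one_diff:
  assumes p: "p \<in> carrier_vec n" "p \<bullet>c p = 1" and q: "q \<in> carrier_vec n" "q \<bullet>c q = 1"
  shows "frob_norm (rank_one p - rank_one q) = sqrt 2 * sqrt (1 - (cmod (q \<bullet>c p))\<^sup>2)"
proof -
  define z where "z = q \<bullet>c p"
  have pp: "(\<Sum>r<n. p $ r * cnj (p $ r)) = 1" and qq: "(\<Sum>r<n. q $ r * cnj (q $ r)) = 1"
    and qp: "(\<Sum>r<n. q $ r * cnj (p $ r)) = z" and pq: "(\<Sum>r<n. p $ r * cnj (q $ r)) = cnj z"
    using p q by (simp_all add: z_def cscalar_prod_eq_sum[of _ n] cnj_sum mult.commute)
  have "complex_of_real (\<Sum>r<n. \<Sum>c<n. (cmod (p $ r * cnj (p $ c) - q $ r * cnj (q $ c)))\<^sup>2)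
     = (\<Sum>r<n. \<Sum>c<n. (p $ r * cnj (p $ r)) * (p $ c * cnj (p $ c)) + (q $ r * cnj (q $ r)) * (q $ c * cnj (q $ c))
        - (p $ r * cnj (q $ r)) * (q $ c * cnj (p $ c)) - (q $ r * cnj (p $ r)) * (p $ c * cnj (q $ c)))"
    by (simp only: of_real_sum complex_norm_square) (intro sum.cong refl, simp add: algebra_simps)
  also have "\<dots> = (\<Sum>r<n. p $ r * cnj (p $ r)) * (\<Sum>c<n. p $ c * cnj (p $ c))
        + (\<Sum>r<n. q $ r * cnj (q $ r)) * (\<Sum>c<n. q $ c * cnj (q $ c))
        - (\<Sum>r<n. p $ r * cnj (q $ r)) * (\<Sum>c<n. q $ c * cnj (p $ c))
        - (\<Sum>r<n. q $ r * cnj (p $ r)) * (\<Sum>c<n. p $ c * cnj (q $ c))"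
    by (simp add: sum_product sum.distrib sum_subtractf)
  also have "\<dots> = 2 - 2 * (z * cnj z)"
    by (simp add: pp qq qp pq)
  also have "\<dots> = complex_of_real (2 - 2 * (cmod z)\<^sup>2)"
    using complex_norm_square[of z] by simp
  finally have "(\<Sum>r<n. \<Sum>c<n. (cmod (p $ r * cnj (p $ c) - q $ r * cnj (q $ c)))\<^sup>2) = 2 - 2 * (cmod z)\<^sup>2"
    by (simp only: of_real_eq_iff)
  then show ?thesis
    using p q by (simp add: frob_norm_def rank_one_def z_def real_sqrt_mult[symmetric] algebra_simps)
qed

lemma rho_f_noisy_pure:
  fixes \<epsilon> c :: complex
  assumes U: "unitary_mat N U" and \<psi>: "\<psi> \<in> carrier_vec (M*N)"
  shows "rho_f M N (\<epsilon> \<cdot>\<^sub>m rank_one \<psi> + c \<cdot>\<^sub>m 1\<^sub>m (M*N)) U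
       = \<epsilon> \<cdot>\<^sub>m rank_one (kron M N (1\<^sub>m M) U *\<^sub>v \<psi>) + c \<cdot>\<^sub>m 1\<^sub>m (M*N)"
proof -
  let ?K = "kron M N (1\<^sub>m M) U"
  have K: "?K \<in> carrier_mat (M*N) (M*N)" "cadj ?K \<in> carrier_mat (M*N) (M*N)"
    by (simp_all add: cadj_def kron_def)
  have KK: "?K * cadj ?K = 1\<^sub>m (M*N)"
    using unitary_kron_one[OF U] by (simp add: unitary_mat_def)
  have R: "rank_one \<psi> \<in> carrier_mat (M*N) (M*N)" using \<psi> by simp
  have KR: "?K * rank_one \<psi> \<in> carrier_mat (M*N) (M*N)" by (rule mult_carrier_mat[OF K(1) R])
  have "?K * (\<epsilon> \<cdot>\<^sub>m rank_one \<psi> + c \<cdot>\<^sub>m 1\<^sub>m (M*N)) * cadj ?K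
      = (\<epsilon> \<cdot>\<^sub>m (?K * rank_one \<psi>) + c \<cdot>\<^sub>m ?K) * cadj ?K"
    using K R by (simp add: mult_add_distrib_mat[of ?K "M*N" "M*N" _ "M*N"]
        mult_smult_distrib[of ?K "M*N" "M*N" _ "M*N"] right_mult_one_mat[OF K(1)])
  also have "\<dots> = \<epsilon> \<cdot>\<^sub>m (?K * rank_one \<psi> * cadj ?K) + c \<cdot>\<^sub>m (?K * cadj ?K)"
    by (simp add: add_mult_distrib_mat[OF smult_carrier_mat[OF KR] smult_carrier_mat[OF K(1)] K(2)]
        mult_smult_assoc_mat[OF KR K(2)] mult_smult_assoc_mat[OF K(1) K(2)])
  also have "\<dots> = \<epsilon> \<cdot>\<^sub>m rank_one (?K *\<^sub>v \<psi>) + c \<cdot>\<^sub>m 1\<^sub>m (M*N)"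
    unfolding rank_one_conj[OF K(1) \<psi>] KK ..
  finally show ?thesis unfolding rho_f_def .
qed

lemma fu_dist_noisy_pure:
  fixes \<epsilon> :: real and c :: complex
  assumes U: "unitary_mat N U" and \<psi>: "\<psi> \<in> carrier_vec (M*N)" "\<psi> \<bullet>c \<psi> = 1" and \<epsilon>: "0 \<le> \<epsilon>"
  shows "fu_dist M N (complex_of_real \<epsilon> \<cdot>\<^sub>m rank_one \<psi> + c \<cdot>\<^sub>m 1\<^sub>m (M*N)) U
       = \<epsilon> * sqrt (1 - (cmod ((kron M N (1\<^sub>m M) U *\<^sub>v \<psi>) \<bullet>c \<psi>))\<^sup>2)"
proof -
  let ?K = "kron M N (1\<^sub>m M) U"
  define \<phi> where "\<phi> = ?K *\<^sub>v \<psi>"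
  have \<phi>: "\<phi> \<in> carrier_vec (M*N)" "\<phi> \<bullet>c \<phi> = 1"
    using unitary_mat_cscalar_prod[OF unitary_kron_one[OF U] \<psi>(1) \<psi>(1)] \<psi>
      mult_mat_vec_carrier[OF kron_carrier \<psi>(1)]
    by (auto simp: \<phi>_def)
  have "(complex_of_real \<epsilon> \<cdot>\<^sub>m rank_one \<psi> + c \<cdot>\<^sub>m 1\<^sub>m (M*N))
        - (complex_of_real \<epsilon> \<cdot>\<^sub>m rank_one \<phi> + c \<cdot>\<^sub>m 1\<^sub>m (M*N))
      = complex_of_real \<epsilon> \<cdot>\<^sub>m (rank_one \<psi> - rank_one \<phi>)"
    using \<psi> \<phi> by (intro eq_matI) (auto simp: rank_one_def algebra_simps)
  then show ?thesis
    using \<epsilon> unfolding fu_dist_def rho_f_noisy_pure[OF U \<psi>(1)] \<phi>_def[symmetric]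
    by (simp add: frob_norm_smult frob_norm_rank_one_diff[OF \<psi> \<phi>])
qed

definition schmidt_vec ::
  "nat \<Rightarrow> nat \<Rightarrow> (nat \<Rightarrow> real) \<Rightarrow> (nat \<Rightarrow> complex vec) \<Rightarrow> (nat \<Rightarrow> complex vec) \<Rightarrow> complex vec" where
  "schmidt_vec M N a e f =
     vec (M*N) (\<lambda>r. \<Sum>k<N. complex_of_real (a k) * (e k $ (r div N)) * (f k $ (r mod N)))"

lemma schmidt_vec_carrier [simp]: "schmidt_vec M N a e f \<in> carrier_vec (M*N)"
  by (simp add: schmidt_vec_def)

lemma dim_vec_schmidt_vec [simp]: "dim_vec (schmidt_vec M N a e f) = M*N"
  by (simp add: schmidt_vec_def)

lemma index_schmidt_vec_pair:
  "i < M \<Longrightarrow> j < N \<Longrightarrow> schmidt_vec M N a e f $ (i*N + j) = (\<Sum>k<N. complex_of_real (a k) * e k $ i * f k $ j)"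
  by (simp add: schmidt_vec_def pair_index_less)

lemma schmidt_vec_cscalar_prod:
  assumes e: "orthonormal M N e" and g: "\<forall>k<N. g k \<in> carrier_vec N" and h: "\<forall>k<N. h k \<in> carrier_vec N"
  shows "schmidt_vec M N a e g \<bullet>c schmidt_vec M N a e h = (\<Sum>k<N. complex_of_real ((a k)\<^sup>2) * (g k \<bullet>c h k))"
proof -
  have "schmidt_vec M N a e g \<bullet>c schmidt_vec M N a e h
      = (\<Sum>i<M. \<Sum>j<N. (\<Sum>k<N. (complex_of_real (a k) * g k $ j) * e k $ i)
                         * cnj (\<Sum>k<N. (complex_of_real (a k) * h k $ j) * e k $ i))"
    unfolding cscalar_prod_eq_sum[OF schmidt_vec_carrier schmidt_vec_carrier] sum_lessThan_mult
    by (intro sum.cong refl) (simp add: index_schmidt_vec_pair mult_ac)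
  also have "\<dots> = (\<Sum>j<N. \<Sum>k<N. (complex_of_real (a k) * g k $ j) * cnj (complex_of_real (a k) * h k $ j))"
    by (subst sum.swap) (simp only: orthonormal_lincomb_cscalar_prod[OF e])
  also have "\<dots> = (\<Sum>k<N. complex_of_real ((a k)\<^sup>2) * (\<Sum>j<N. g k $ j * cnj (h k $ j)))"
    by (subst sum.swap) (simp add: sum_distrib_left power2_eq_square mult_ac)
  also have "\<dots> = (\<Sum>k<N. complex_of_real ((a k)\<^sup>2) * (g k \<bullet>c h k))"
    using g h by (simp add: cscalar_prod_eq_sum[of _ N])
  finally show ?thesis .
qed

lemma kron_one_mult_schmidt_vec:
  assumes U: "U \<in> carrier_mat N N" and f: "\<forall>k<N. f k \<in> carrier_vec N"
  shows "kron M N (1\<^sub>m M) U *\<^sub>v schmidt_vec M N a e f = schmidt_vec M N a e (\<lambda>k. U *\<^sub>v f k)"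
proof (rule eq_vecI)
  fix r assume "r < dim_vec (schmidt_vec M N a e (\<lambda>k. U *\<^sub>v f k))"
  then have r: "r < M*N" by (simp add: schmidt_vec_def)
  then have rb: "r div N < M" "r mod N < N" by (simp_all add: pair_index_bounds)
  have "(kron M N (1\<^sub>m M) U *\<^sub>v schmidt_vec M N a e f) $ r
      = (\<Sum>i<M. \<Sum>j<N. (if r div N = i then U $$ (r mod N, j) else 0)
                         * (\<Sum>k<N. complex_of_real (a k) * e k $ i * f k $ j))"
    unfolding index_mult_mat_vec_sum[OF kron_carrier schmidt_vec_carrier r] sum_lessThan_mult
    using r by (intro sum.cong refl) (simp add: index_kron_one pair_index_less index_schmidt_vec_pair)
  also have "\<dots> = (\<Sum>i<M. if i = r div N then
                   (\<Sum>j<N. U $$ (r mod N, j) * (\<Sum>k<N. complex_of_real (a k) * e k $ i * f k $ j))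
                 else 0)"
    by (intro sum.cong refl) auto
  also have "\<dots> = (\<Sum>j<N. U $$ (r mod N, j) * (\<Sum>k<N. complex_of_real (a k) * e k $ (r div N) * f k $ j))"
    using rb by (simp add: sum.delta')
  also have "\<dots> = (\<Sum>k<N. complex_of_real (a k) * e k $ (r div N) * (\<Sum>j<N. U $$ (r mod N, j) * f k $ j))"
    by (simp add: sum_distrib_left mult_ac) (rule sum.swap)
  also have "\<dots> = schmidt_vec M N a e (\<lambda>k. U *\<^sub>v f k) $ r"
    using r rb U f by (simp add: schmidt_vec_def index_mult_mat_vec_sum[of U N N] del: index_mult_mat_vec)
  finally show "(kron M N (1\<^sub>m M) U *\<^sub>v schmidt_vec M N a e f) $ r = schmidt_vec M N a e (\<lambda>k. U *\<^sub>v f k) $ r" .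
qed (simp add: schmidt_vec_def kron_def)

section \<open>The isotropic-noise Schmidt state\<close>

lemma cmod_convex_comb_ge:
  fixes p :: "nat \<Rightarrow> real" and \<beta> :: "nat \<Rightarrow> complex"
  assumes p: "\<forall>k<n. 0 \<le> p k" "(\<Sum>k<n. p k) = 1" and \<beta>: "\<forall>k<n. cmod (\<beta> k) \<le> 1"
    and m: "m < n" "cmod (\<beta> m) = 1"
  shows "2 * p m - 1 \<le> cmod (\<Sum>k<n. complex_of_real (p k) * \<beta> k)"
proof -
  let ?rest = "\<Sum>k\<in>{..<n} - {m}. complex_of_real (p k) * \<beta> k"
  have "cmod ?rest \<le> (\<Sum>k\<in>{..<n} - {m}. cmod (complex_of_real (p k) * \<beta> k))"
    by (rule norm_sum)
  also have "\<dots> \<le> (\<Sum>k\<in>{..<n} - {m}. p k)"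
    using p \<beta> by (intro sum_mono) (auto simp: norm_mult mult_left_le)
  also have "\<dots> = 1 - p m"
    using sum.remove[of "{..<n}" m p] m p by simp
  finally have "cmod ?rest \<le> 1 - p m" .
  moreover have "cmod (complex_of_real (p m) * \<beta> m) = p m" using p m by (simp add: norm_mult)
  moreover have "(\<Sum>k<n. complex_of_real (p k) * \<beta> k) = complex_of_real (p m) * \<beta> m + ?rest"
    using sum.remove[of "{..<n}" m] m by simp
  ultimately show ?thesis
    using norm_diff_ineq[of "complex_of_real (p m) * \<beta> m" ?rest] by simp
qed

lemma sqrt_one_minus_sq_double:
  fixes x :: real
  assumes "0 \<le> x" "x\<^sup>2 \<le> 1"
  shows "sqrt (1 - (2 * x\<^sup>2 - 1)\<^sup>2) = 2 * x * sqrt (1 - x\<^sup>2)"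
proof -
  have "1 - (2 * x\<^sup>2 - 1)\<^sup>2 = (2 * x * sqrt (1 - x\<^sup>2))\<^sup>2"
    using assms by (simp add: power_mult_distrib power2_eq_square algebra_simps)
  moreover have "2 * x * sqrt (1 - x\<^sup>2) \<ge> 0" using assms by simp
  ultimately show ?thesis by simp
qed

locale noisy_schmidt_state =
  fixes M N :: nat and a :: "nat \<Rightarrow> real" and e f :: "nat \<Rightarrow> complex vec" and \<epsilon> c :: real
  assumes e: "orthonormal M N e" and f: "orthonormal N N f"
    and a_nonneg: "\<forall>k<N. 0 \<le> a k" and a_norm: "(\<Sum>k<N. (a k)\<^sup>2) = 1" and \<epsilon>_pos: "0 < \<epsilon>"
begin

definition state :: "complex mat" where
  "state = complex_of_real \<epsilon> \<cdot>\<^sub>m rank_one (schmidt_vec M N a e f) + complex_of_real c \<cdot>\<^sub>m 1\<^sub>m (M*N)"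

lemma f_carrier: "\<forall>k<N. f k \<in> carrier_vec N"
  using f by (simp add: orthonormal_carrier)

lemma fu_dist_state:
  assumes U: "unitary_mat N U"
  shows "fu_dist M N state U
       = \<epsilon> * sqrt (1 - (cmod (\<Sum>k<N. complex_of_real ((a k)\<^sup>2) * ((U *\<^sub>v f k) \<bullet>c f k)))\<^sup>2)"
proof -
  have Uc: "U \<in> carrier_mat N N" using U by (simp add: unitary_mat_def)
  have "schmidt_vec M N a e f \<bullet>c schmidt_vec M N a e f = (\<Sum>k<N. complex_of_real ((a k)\<^sup>2))"
    using f by (simp add: schmidt_vec_cscalar_prod[OF e f_carrier f_carrier] orthonormal_cscalar_prod)
  also have "\<dots> = 1" using a_norm by (metis of_real_1 of_real_sum)
  finally have unit: "schmidt_vec M N a e f \<bullet>c schmidt_vec M N a e f = 1" .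
  have "(kron M N (1\<^sub>m M) U *\<^sub>v schmidt_vec M N a e f) \<bullet>c schmidt_vec M N a e f
      = (\<Sum>k<N. complex_of_real ((a k)\<^sup>2) * ((U *\<^sub>v f k) \<bullet>c f k))"
    using Uc f_carrier
    by (simp add: kron_one_mult_schmidt_vec schmidt_vec_cscalar_prod[OF e] mult_mat_vec_carrier)
  then show ?thesis
    using fu_dist_noisy_pure[OF U schmidt_vec_carrier unit] \<epsilon>_pos by (simp add: state_def)
qed

lemma ptrace_A_state:
  "ptrace_A M N state = diag_in_basis N f (complex_of_real (c * M)) (\<lambda>k. complex_of_real (\<epsilon> * (a k)\<^sup>2))"
  (is "_ = ?D")
proof (rule eq_matI)
  fix j j' assume "j < dim_row ?D" "j' < dim_col ?D"
  then have j: "j < N" "j' < N" by (simp_all add: diag_in_basis_def)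
  have "ptrace_A M N state $$ (j,j') = (\<Sum>i<M. state $$ (i*N + j, i*N + j'))"
    using j by (simp add: ptrace_A_def)
  also have "\<dots> = (\<Sum>i<M. complex_of_real \<epsilon> * ((\<Sum>k<N. (complex_of_real (a k) * f k $ j) * e k $ i)
                * cnj (\<Sum>k<N. (complex_of_real (a k) * f k $ j') * e k $ i))
          + complex_of_real c * (if j = j' then 1 else 0))"
    using j by (intro sum.cong refl)
      (simp add: state_def rank_one_def pair_index_less index_schmidt_vec_pair mult_ac)
  also have "\<dots> = complex_of_real \<epsilon> * (\<Sum>k<N. (complex_of_real (a k) * f k $ j) * cnj (complex_of_real (a k) * f k $ j'))
       + complex_of_real (c * M) * (if j = j' then 1 else 0)"
    by (simp only: sum.distrib sum_distrib_left[symmetric] orthonormal_lincomb_cscalar_prod[OF e]) simp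
  also have "\<dots> = ?D $$ (j,j')"
    using j by (simp add: index_diag_in_basis sum_distrib_left power2_eq_square mult_ac)
  finally show "ptrace_A M N state $$ (j,j') = ?D $$ (j,j')" .
qed (simp_all add: ptrace_A_def diag_in_basis_def)

lemma cyclic_phase_unitary:
  "\<forall>k. cmod (w k) = 1 \<Longrightarrow> cyclic_unitary M N state (phase_unitary N f w)"
  using unitary_phase_unitary[OF f] diag_in_basis_commute[OF f]
  by (simp add: cyclic_unitary_def ptrace_A_state phase_unitary_def)

lemma fu_dist_state_phase_unitary:
  "\<forall>k. cmod (w k) = 1 \<Longrightarrow>
   fu_dist M N state (phase_unitary N f w) = \<epsilon> * sqrt (1 - (cmod (\<Sum>k<N. complex_of_real ((a k)\<^sup>2) * w k))\<^sup>2)"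
  using fu_dist_state[OF unitary_phase_unitary[OF f]] by (simp add: phase_unitary_cscalar_prod[OF f])

lemma cyclic_unitary_dominant_phase:
  assumes U: "cyclic_unitary M N state U" and m: "m < N" and dominant: "1/2 < (a m)\<^sup>2"
  shows "cmod ((U *\<^sub>v f m) \<bullet>c f m) = 1"
proof (rule commuting_unitary_simple_eigvec[OF f _ _ m])
  show "unitary_mat N U"
    and "diag_in_basis N f (complex_of_real (c * M)) (\<lambda>k. complex_of_real (\<epsilon> * (a k)\<^sup>2)) * U
       = U * diag_in_basis N f (complex_of_real (c * M)) (\<lambda>k. complex_of_real (\<epsilon> * (a k)\<^sup>2))"
    using U by (simp_all add: cyclic_unitary_def ptrace_A_state)
  show "complex_of_real (\<epsilon> * (a m)\<^sup>2) \<noteq> 0" using \<epsilon>_pos dominant by auto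
  show "\<forall>l<N. l \<noteq> m \<longrightarrow> complex_of_real (\<epsilon> * (a l)\<^sup>2) \<noteq> complex_of_real (\<epsilon> * (a m)\<^sup>2)"
  proof (intro allI impI)
    fix l assume l: "l < N" "l \<noteq> m"
    have "(\<Sum>k\<in>{l,m}. (a k)\<^sup>2) \<le> (\<Sum>k<N. (a k)\<^sup>2)" using l m by (intro sum_mono2) auto
    then have "(a l)\<^sup>2 < (a m)\<^sup>2" using l dominant a_norm by simp
    then show "complex_of_real (\<epsilon> * (a l)\<^sup>2) \<noteq> complex_of_real (\<epsilon> * (a m)\<^sup>2)"
      using \<epsilon>_pos by (simp only: of_real_eq_iff) simp
  qed
qed

lemma fu_dist_state_le:
  assumes U: "cyclic_unitary M N state U" and m: "m < N"
  shows "fu_dist M N state U \<le> (if (a m)\<^sup>2 \<le> 1/2 then \<epsilon> else 2 * \<epsilon> * a m * sqrt (1 - (a m)\<^sup>2))"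
proof -
  have Uu: "unitary_mat N U" and Uc: "U \<in> carrier_mat N N"
    using U by (auto simp: cyclic_unitary_def unitary_mat_def)
  define z where "z = (\<Sum>k<N. complex_of_real ((a k)\<^sup>2) * ((U *\<^sub>v f k) \<bullet>c f k))"
  have fu: "fu_dist M N state U = \<epsilon> * sqrt (1 - (cmod z)\<^sup>2)"
    unfolding z_def by (rule fu_dist_state[OF Uu])
  show ?thesis
  proof (cases "(a m)\<^sup>2 \<le> 1/2")
    case True
    then show ?thesis using \<epsilon>_pos by (simp add: fu)
  next
    case False
    have am: "0 \<le> a m" "(a m)\<^sup>2 \<le> 1"
      using a_nonneg m member_le_sum[of m "{..<N}" "\<lambda>k. (a k)\<^sup>2"] a_norm by auto
    have "\<forall>k<N. cmod ((U *\<^sub>v f k) \<bullet>c f k) \<le> 1"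
      using f Uc unitary_mat_cscalar_prod[OF Uu]
      by (auto intro!: cmod_cscalar_prod_le_1[of _ N] simp: orthonormal_carrier orthonormal_cscalar_prod)
    then have "2 * (a m)\<^sup>2 - 1 \<le> cmod z"
      using cmod_convex_comb_ge[of N "\<lambda>k. (a k)\<^sup>2"] a_norm m
        cyclic_unitary_dominant_phase[OF U m(1)] False
      unfolding z_def by simp
    then have "(2 * (a m)\<^sup>2 - 1)\<^sup>2 \<le> (cmod z)\<^sup>2" using False by (intro power_mono) auto
    then have "sqrt (1 - (cmod z)\<^sup>2) \<le> sqrt (1 - (2 * (a m)\<^sup>2 - 1)\<^sup>2)"
      by (intro real_sqrt_le_mono) simp
    also have "\<dots> = 2 * a m * sqrt (1 - (a m)\<^sup>2)" by (rule sqrt_one_minus_sq_double[OF am])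
    finally have "sqrt (1 - (cmod z)\<^sup>2) \<le> 2 * a m * sqrt (1 - (a m)\<^sup>2)" .
    then show ?thesis using \<epsilon>_pos False by (simp add: fu)
  qed
qed

lemma fu_dist_state_attained:
  assumes m: "m < N" "\<forall>k<N. a k \<le> a m"
  shows "\<exists>U. cyclic_unitary M N state U \<and>
           fu_dist M N state U = (if (a m)\<^sup>2 \<le> 1/2 then \<epsilon> else 2 * \<epsilon> * a m * sqrt (1 - (a m)\<^sup>2))"
proof (cases "(a m)\<^sup>2 \<le> 1/2")
  case True
  have "\<forall>k<N. 2 * (a k)\<^sup>2 \<le> (\<Sum>k<N. (a k)\<^sup>2)"
  proof (intro allI impI)
    fix k assume "k < N"
    then have "(a k)\<^sup>2 \<le> (a m)\<^sup>2" using m a_nonneg by (intro power_mono) auto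
    then show "2 * (a k)\<^sup>2 \<le> (\<Sum>k<N. (a k)\<^sup>2)" using True a_norm by simp
  qed
  then obtain w where w: "\<forall>k. cmod (w k) = 1" "(\<Sum>k<N. complex_of_real ((a k)\<^sup>2) * w k) = 0"
    using polygon_phases_sum_zero[of N "\<lambda>k. (a k)\<^sup>2"] a_nonneg by auto
  then show ?thesis
    using True cyclic_phase_unitary[OF w(1)] fu_dist_state_phase_unitary[OF w(1)]
    by (intro exI[of _ "phase_unitary N f w"]) simp
next
  case False
  define s where "s = (\<lambda>k. if k = m then -1 else (1::real))"
  define w where "w = (\<lambda>k. complex_of_real (s k))"
  have w: "\<forall>k. cmod (w k) = 1" by (simp add: w_def s_def)
  have am: "0 \<le> a m" "(a m)\<^sup>2 \<le> 1"
    using a_nonneg m member_le_sum[of m "{..<N}" "\<lambda>k. (a k)\<^sup>2"] a_norm by auto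
  have "(\<Sum>k<N. (a k)\<^sup>2 * s k) = (\<Sum>k<N. (a k)\<^sup>2 - (if k = m then 2 * (a m)\<^sup>2 else 0))"
    by (intro sum.cong refl) (simp add: s_def)
  also have "\<dots> = 1 - 2 * (a m)\<^sup>2"
    using m a_norm by (simp add: sum_subtractf)
  finally have "(\<Sum>k<N. complex_of_real ((a k)\<^sup>2) * w k) = complex_of_real (1 - 2 * (a m)\<^sup>2)"
    unfolding w_def by (simp only: of_real_mult[symmetric] of_real_sum[symmetric])
  then have "cmod (\<Sum>k<N. complex_of_real ((a k)\<^sup>2) * w k) = \<bar>1 - 2 * (a m)\<^sup>2\<bar>"
    by (simp only: norm_of_real)
  then have "cmod (\<Sum>k<N. complex_of_real ((a k)\<^sup>2) * w k) = 2 * (a m)\<^sup>2 - 1"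
    using False by simp
  then show ?thesis
    using False cyclic_phase_unitary[OF w] fu_dist_state_phase_unitary[OF w]
      sqrt_one_minus_sq_double[OF am]
    by (intro exI[of _ "phase_unitary N f w"]) (simp add: mult_ac)
qed

lemma d_max_state:
  defines "am \<equiv> Max (a ` {..<N})"
  shows "(\<exists>U. cyclic_unitary M N state U \<and> fu_dist M N state U = d_max M N state) \<and>
         d_max M N state = (if am\<^sup>2 \<le> 1/2 then \<epsilon> else 2 * \<epsilon> * am * sqrt (1 - am\<^sup>2))"
proof -
  have fin: "finite (a ` {..<N})" by simp
  have "N \<noteq> 0" using a_norm by (intro notI) simp
  then have "am \<in> a ` {..<N}" unfolding am_def by (intro Max_in[OF fin]) auto
  then obtain m where m: "m < N" "a m = am" by auto
  have dominant: "\<forall>k<N. a k \<le> a m" unfolding m(2) am_def using fin by (auto intro: Max_ge)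
  obtain U where U: "cyclic_unitary M N state U"
    "fu_dist M N state U = (if am\<^sup>2 \<le> 1/2 then \<epsilon> else 2 * \<epsilon> * am * sqrt (1 - am\<^sup>2))"
    using fu_dist_state_attained[OF m(1) dominant] unfolding m(2) by blast
  have "d_max M N state = fu_dist M N state U"
    unfolding d_max_def
  proof (rule cSup_eq_maximum)
    show "fu_dist M N state U \<in> {fu_dist M N state V | V. cyclic_unitary M N state V}"
      using U by blast
    fix x assume "x \<in> {fu_dist M N state V | V. cyclic_unitary M N state V}"
    then obtain V where "cyclic_unitary M N state V" "x = fu_dist M N state V" by blast
    then show "x \<le> fu_dist M N state U"
      using fu_dist_state_le[OF _ m(1)] U(2) unfolding m(2) by simp
  qed
  then show ?thesis using U by auto
qed

end

theorem theorem1: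
  fixes M N :: nat and \<epsilon> :: real and a :: "nat \<Rightarrow> real"
    and e f :: "nat \<Rightarrow> complex vec" and \<psi> :: "complex vec" and \<rho> :: "complex mat"
  assumes "M \<ge> N" and "N \<ge> 1"
    and "0 < \<epsilon>" and "\<epsilon> \<le> 1"
    and "\<forall>k<N. a k \<ge> 0" and "(\<Sum>k<N. (a k)\<^sup>2) = 1"
    and "\<forall>k<N. e k \<in> carrier_vec M" and "\<forall>k<N. \<forall>l<N. e k \<bullet>c e l = (if k = l then 1 else 0)"
    and "\<forall>k<N. f k \<in> carrier_vec N" and "\<forall>k<N. \<forall>l<N. f k \<bullet>c f l = (if k = l then 1 else 0)"
    and "\<psi> = vec (M*N) (\<lambda>r. \<Sum>k<N. complex_of_real (a k) * (e k $ (r div N)) * (f k $ (r mod N)))"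
    and "\<rho> = complex_of_real \<epsilon> \<cdot>\<^sub>m mat (M*N) (M*N) (\<lambda>(r,c). \<psi> $ r * cnj (\<psi> $ c))
             + complex_of_real ((1 - \<epsilon>) / real (M*N)) \<cdot>\<^sub>m 1\<^sub>m (M*N)"
  defines "am \<equiv> Max (a ` {..<N})"
  shows "(\<exists>U. cyclic_unitary M N \<rho> U \<and> fu_dist M N \<rho> U = d_max M N \<rho>) \<and>
         d_max M N \<rho> = (if am\<^sup>2 \<le> 1/2 then \<epsilon> else 2 * \<epsilon> * am * sqrt (1 - am\<^sup>2))"
proof -
  interpret noisy_schmidt_state M N a e f \<epsilon> "(1 - \<epsilon>) / real (M*N)"
    using assms by unfold_locales (simp_all add: orthonormal_def)
  have "\<rho> = state"
    using assms(11,12) unfolding state_def by (simp add: rank_one_def schmidt_vec_def)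
  then show ?thesis unfolding am_def by (rule ssubst) (rule d_max_state)
qed

end
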